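(* For every $n\ge1$, the maps $\varphi\colon\mathscr C_n(A)\to\mathscr G_n^{\mathrm{ext}}(A)$ are well defined (i.e. $\varphi(c)$ has no directed cycle of uniform weight) and form a lax morphism of operads: for $c\in\mathscr C_n(A)$, $d\in\mathscr C_n(B)$ and $a\in A$ one has $\varphi(c\circ_a d)\le\varphi(c)\circ_a\varphi(d)$ in $\mathscr G_n^{\mathrm{ext}}(A[B/a])$, and $\varphi$ commutes with relabelling along bijections.
   Context: $\mathscr C_n(A)$ (little $n$-cubes) is the space of families $c=(c_a)_{a\in A}$ of maps $c_a\colon(0,1)^n\to(0,1)^n$, $c_a(x)=u(a)\odot x+v(a)$ with $u(a)\in\mathbb R_{>0}^n$ ($\odot$ = coordinatewise product), whose images are pairwise disjoint; symmetric groups permute the indices and $c\circ_a d$ is obtained by composing the embeddings $d_b$ with $c_a$, i.e. $(c\circ_a d)_{a'}=c_{a'}$ for $a'\neq a$ and $(c\circ_a d)_b=c_a\circ d_b$. Put $w(a)=u(a)+v(a)$. Say $c_a$ is $i$-below $c_b$ if $w(a)_i\le v(b)_i$, and $c_a,c_b$ are $i$-separated if one is $i$-below the other. $\varphi(c)$ is the complete directed graph on $A$ in which the edge between $a\neq b$ has weight the smallest $i$ such that $c_a,c_b$ are $i$-separated, directed $a\to b$ iff $c_a$ is $i$-below $c_b$. Weighted complete directed graphs on $A$: each two-element subset $\{a,b\}$ carries exactly one directed edge with weight in $\{1,\dots,n\}$; order $g\le h$ iff whenever $a\xrightarrow{v}b$ in $g$, either $a\xrightarrow{w}b$ in $h$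 with $v\le w$ or $b\xrightarrow{w}a$ in $h$ with $v<w$. $\mathscr G_n^{\mathrm{ext}}(A)$ is the poset of such graphs with no directed cycle of uniform weight, with composition $g\circ_a h$ on $(A\setminus\{a\})\sqcup B$: edges among $A\setminus\{a\}$ as in $g$, among $B$ as in $h$, and between $a'\in A\setminus\{a\}$ and $b\in B$ as the edge between $a'$ and $a$ in $g$. *)

theory Defs
  imports Complex_Main
begin

text \<open>Points of R^n are functions nat => real, coordinates 1..n (value 0 elsewhere).
  A little cube is given by its data (u, v): c(x) = u (.) x + v.\<close>

type_synonym cube = "(nat \<Rightarrow> real) \<times> (nat \<Rightarrow> real)"

definition open_unit_cube :: "nat \<Rightarrow> (nat \<Rightarrow> real) set" where
  "open_unit_cube n = {x. (\<forall>i\<in>{1..n}. 0 < x i \<and> x i < 1) \<and> (\<forall>i. i \<notin> {1..n} \<longrightarrow> x i = 0)}"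

definition cube_map :: "nat \<Rightarrow> cube \<Rightarrow> (nat \<Rightarrow> real) \<Rightarrow> (nat \<Rightarrow> real)" where
  "cube_map n c x = (\<lambda>i. if i \<in> {1..n} then fst c i * x i + snd c i else 0)"

definition cube_image :: "nat \<Rightarrow> cube \<Rightarrow> (nat \<Rightarrow> real) set" where
  "cube_image n c = cube_map n c ` open_unit_cube n"

definition little_cubes :: "nat \<Rightarrow> 'a set \<Rightarrow> ('a \<Rightarrow> cube) \<Rightarrow> bool" where
  "little_cubes n A c \<longleftrightarrow>
     (\<forall>a\<in>A. (\<forall>i\<in>{1..n}. fst (c a) i > 0) \<and> cube_image n (c a) \<subseteq> open_unit_cube n) \<and>
     (\<forall>a\<in>A. \<forall>b\<in>A. a \<noteq> b \<longrightarrow> cube_image n (c a) \<inter> cube_image n (c b) = {})"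

definition cube_w :: "cube \<Rightarrow> nat \<Rightarrow> real" where
  "cube_w c i = fst c i + snd c i"

definition i_below :: "cube \<Rightarrow> cube \<Rightarrow> nat \<Rightarrow> bool" where
  "i_below ca cb i \<longleftrightarrow> cube_w ca i \<le> snd cb i"

definition i_separated :: "cube \<Rightarrow> cube \<Rightarrow> nat \<Rightarrow> bool" where
  "i_separated ca cb i \<longleftrightarrow> i_below ca cb i \<or> i_below cb ca i"

text \<open>Operadic composition c o_a d, indexed by (A - {a}) + B, encoded as Inl/Inr.\<close>
definition cube_compose :: "cube \<Rightarrow> cube \<Rightarrow> cube" where
  "cube_compose p q = ((\<lambda>i. fst p i * fst q i), (\<lambda>i. fst p i * snd q i + snd p i))"

definition cubes_comp :: "'a \<Rightarrow> ('a \<Rightarrow> cube) \<Rightarrow> ('b \<Rightarrow> cube) \<Rightarrow> ('a + 'b \<Rightarrow> cube)" where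
  "cubes_comp a c d = (\<lambda>x. case x of Inl a' \<Rightarrow> c a' | Inr b \<Rightarrow> cube_compose (c a) (d b))"

definition subst_index :: "'a set \<Rightarrow> 'a \<Rightarrow> 'b set \<Rightarrow> ('a + 'b) set" where
  "subst_index A a B = Inl ` (A - {a}) \<union> Inr ` B"

text \<open>Weighted complete directed graphs: g x y = w > 0 means an edge x -> y of weight w;
  g x y = 0 means no edge x -> y.\<close>
definition wcd_graph :: "nat \<Rightarrow> 'a set \<Rightarrow> ('a \<Rightarrow> 'a \<Rightarrow> nat) \<Rightarrow> bool" where
  "wcd_graph n A g \<longleftrightarrow>
     (\<forall>x y. (x \<notin> A \<or> y \<notin> A \<or> x = y) \<longrightarrow> g x y = 0) \<and>
     (\<forall>x\<in>A. \<forall>y\<in>A. x \<noteq> y \<longrightarrow>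
        ((g x y \<noteq> 0 \<and> g y x = 0) \<or> (g x y = 0 \<and> g y x \<noteq> 0)) \<and> g x y \<le> n)"

definition has_uniform_cycle :: "'a set \<Rightarrow> ('a \<Rightarrow> 'a \<Rightarrow> nat) \<Rightarrow> bool" where
  "has_uniform_cycle A g \<longleftrightarrow>
     (\<exists>xs i. xs \<noteq> [] \<and> i \<ge> 1 \<and> set xs \<subseteq> A \<and>
        (\<forall>j < length xs. g (xs ! j) (xs ! ((j + 1) mod length xs)) = i))"

definition graph_ext :: "nat \<Rightarrow> 'a set \<Rightarrow> ('a \<Rightarrow> 'a \<Rightarrow> nat) \<Rightarrow> bool" where
  "graph_ext n A g \<longleftrightarrow> wcd_graph n A g \<and> \<not> has_uniform_cycle A g"

definition graph_le :: "('a \<Rightarrow> 'a \<Rightarrow> nat) \<Rightarrow> ('a \<Rightarrow> 'a \<Rightarrow> nat) \<Rightarrow> bool" where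
  "graph_le g h \<longleftrightarrow> (\<forall>x y. g x y \<noteq> 0 \<longrightarrow> (g x y \<le> h x y \<or> g x y < h y x))"

definition graph_comp :: "'a \<Rightarrow> ('a \<Rightarrow> 'a \<Rightarrow> nat) \<Rightarrow> ('b \<Rightarrow> 'b \<Rightarrow> nat) \<Rightarrow> ('a + 'b \<Rightarrow> 'a + 'b \<Rightarrow> nat)" where
  "graph_comp a g h = (\<lambda>x y. case (x, y) of
       (Inl x', Inl y') \<Rightarrow> if x' \<noteq> a \<and> y' \<noteq> a then g x' y' else 0
     | (Inr x', Inr y') \<Rightarrow> h x' y'
     | (Inl x', Inr y') \<Rightarrow> if x' \<noteq> a then g x' a else 0
     | (Inr x', Inl y') \<Rightarrow> if y' \<noteq> a then g a y' else 0)"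

definition phi :: "nat \<Rightarrow> 'a set \<Rightarrow> ('a \<Rightarrow> cube) \<Rightarrow> ('a \<Rightarrow> 'a \<Rightarrow> nat)" where
  "phi n A c = (\<lambda>x y.
     if x \<in> A \<and> y \<in> A \<and> x \<noteq> y \<and> (\<exists>i\<in>{1..n}. i_separated (c x) (c y) i) then
       (let i = (LEAST i. i \<in> {1..n} \<and> i_separated (c x) (c y) i)
        in if i_below (c x) (c y) i then i else 0)
     else 0)"

definition relabel_cubes :: "('a \<Rightarrow> 'b) \<Rightarrow> 'a set \<Rightarrow> ('a \<Rightarrow> cube) \<Rightarrow> ('b \<Rightarrow> cube)" where
  "relabel_cubes f A c = (\<lambda>y. c (inv_into A f y))"

definition relabel_graph :: "('a \<Rightarrow> 'b) \<Rightarrow> 'a set \<Rightarrow> ('a \<Rightarrow> 'a \<Rightarrow> nat) \<Rightarrow> ('b \<Rightarrow> 'b \<Rightarrow> nat)" where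
  "relabel_graph f A g = (\<lambda>x y. if x \<in> f ` A \<and> y \<in> f ` A then g (inv_into A f x) (inv_into A f y) else 0)"

end

theory Submission
  imports Defs
begin

text \<open>Along an edge of weight \<open>i\<close> the
  \<open>i\<close>-th lower corner strictly increases, so no cycle has uniform weight. In \<open>c \<circ>\<^sub>a d\<close> each cube
  \<open>c\<^sub>a \<circ> d\<^sub>b\<close> lies inside \<open>c\<^sub>a\<close>, so it inherits every separation of \<open>c\<^sub>a\<close> from another cube
  \<open>c\<^sub>x\<close>: the first separating coordinate can only drop, and if it stays the same the direction
  is the same. Among the cubes \<open>c\<^sub>a \<circ> d\<^sub>b\<close> the relations are those of the \<open>d\<^sub>b\<close>, because
  \<open>c\<^sub>a\<close> is an increasing affine map in each coordinate.\<close>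

definition first_separation :: "nat \<Rightarrow> cube \<Rightarrow> cube \<Rightarrow> nat" where
  "first_separation n p q = (LEAST i. i \<in> {1..n} \<and> i_separated p q i)"

definition edge_weight :: "nat \<Rightarrow> cube \<Rightarrow> cube \<Rightarrow> nat" where
  "edge_weight n p q =
     (if \<exists>i\<in>{1..n}. i_separated p q i then
        (if i_below p q (first_separation n p q) then first_separation n p q else 0)
      else 0)"

definition positive_cube :: "nat \<Rightarrow> cube \<Rightarrow> bool" where
  "positive_cube n p \<longleftrightarrow> (\<forall>i\<in>{1..n}. fst p i > 0)"

lemma phi_eq_edge_weight:
  "phi n A c x y = (if x \<in> A \<and> y \<in> A \<and> x \<noteq> y then edge_weight n (c x) (c y) else 0)"
  unfolding phi_def edge_weight_def first_separation_def Let_def by auto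

lemma i_separated_commute: "i_separated p q i = i_separated q p i"
  unfolding i_separated_def by auto

lemma first_separation_commute: "first_separation n p q = first_separation n q p"
  unfolding first_separation_def by (simp add: i_separated_commute)

lemma
  assumes "\<exists>i\<in>{1..n}. i_separated p q i"
  shows first_separation_in_range: "first_separation n p q \<in> {1..n}"
    and i_separated_first_separation: "i_separated p q (first_separation n p q)"
proof -
  have "\<exists>i. i \<in> {1..n} \<and> i_separated p q i" using assms by blast
  from LeastI_ex[OF this] show "first_separation n p q \<in> {1..n}"
    and "i_separated p q (first_separation n p q)"
    unfolding first_separation_def by auto
qed

lemma first_separation_le:
  "j \<in> {1..n} \<Longrightarrow> i_separated p q j \<Longrightarrow> first_separation n p q \<le> j"
  unfolding first_separation_def by (rule Least_le) simp

lemma not_i_below_both: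
  assumes "positive_cube n p" "positive_cube n q" "i \<in> {1..n}"
  shows "\<not> (i_below p q i \<and> i_below q p i)"
  using assms unfolding positive_cube_def i_below_def cube_w_def by force

lemma edge_weight_nonzeroD:
  assumes "edge_weight n p q \<noteq> 0"
  shows "\<exists>i\<in>{1..n}. i_separated p q i"
    and "edge_weight n p q = first_separation n p q"
    and "i_below p q (first_separation n p q)"
  using assms unfolding edge_weight_def by (auto split: if_splits)

lemma edge_weight_exactly_one_direction:
  assumes "positive_cube n p" "positive_cube n q" "\<exists>i\<in>{1..n}. i_separated p q i"
  shows "(edge_weight n p q \<noteq> 0) \<noteq> (edge_weight n q p \<noteq> 0)"
proof -
  let ?j = "first_separation n p q"
  have "?j \<in> {1..n}" "i_separated p q ?j"
    using first_separation_in_range[OF assms(3)] i_separated_first_separation[OF assms(3)] .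
  moreover have "\<exists>i\<in>{1..n}. i_separated q p i"
    using assms(3) i_separated_commute by blast
  ultimately show ?thesis
    using not_i_below_both[OF assms(1,2)] assms(3)
    unfolding edge_weight_def first_separation_commute[of n q p] i_separated_def by auto
qed

lemma edge_weight_le: "edge_weight n p q \<le> n"
  using first_separation_in_range unfolding edge_weight_def by fastforce

lemma edge_weight_lax:
  assumes pos: "positive_cube n p" "positive_cube n q"
    and sep': "\<exists>i\<in>{1..n}. i_separated p' q' i"
    and transfer: "\<And>i. i \<in> {1..n} \<Longrightarrow>
          (i_below p' q' i \<longrightarrow> i_below p q i) \<and> (i_below q' p' i \<longrightarrow> i_below q p i)"
    and nonzero: "edge_weight n p q \<noteq> 0"
  shows "edge_weight n p q \<le> edge_weight n p' q' \<or> edge_weight n p q < edge_weight n q' p'"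
proof -
  let ?k = "first_separation n p q" and ?j = "first_separation n p' q'"
  note k = edge_weight_nonzeroD[OF nonzero]
  have j: "?j \<in> {1..n}" "i_separated p' q' ?j"
    using first_separation_in_range[OF sep'] i_separated_first_separation[OF sep'] .
  have "i_separated p q ?j" using j transfer unfolding i_separated_def by blast
  then have k_le_j: "?k \<le> ?j" using first_separation_le j(1) by blast
  show ?thesis
  proof (cases "i_below p' q' ?j")
    case True
    then have "edge_weight n p' q' = ?j" using sep' unfolding edge_weight_def by simp
    then show ?thesis using k(2) k_le_j by simp
  next
    case False
    then have below: "i_below q' p' ?j" using j(2) unfolding i_separated_def by blast
    have "\<exists>i\<in>{1..n}. i_separated q' p' i" using sep' i_separated_commute by blast
    then have reverse: "edge_weight n q' p' = ?j"
      using below unfolding edge_weight_def first_separation_commute[of n q' p'] by simp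
    have "?k \<noteq> ?j"
      using not_i_below_both[OF pos first_separation_in_range[OF k(1)]] k(3) below transfer j(1)
      by auto
    then show ?thesis using reverse k(2) k_le_j by simp
  qed
qed

lemma edge_weight_cong:
  assumes "\<And>i. i \<in> {1..n} \<Longrightarrow> i_below p q i = i_below p' q' i \<and> i_below q p i = i_below q' p' i"
  shows "edge_weight n p q = edge_weight n p' q'"
proof -
  have sep: "\<And>i. i \<in> {1..n} \<Longrightarrow> i_separated p q i = i_separated p' q' i"
    using assms unfolding i_separated_def by blast
  then have first: "first_separation n p q = first_separation n p' q'"
    unfolding first_separation_def by (metis (lifting))
  show ?thesis
  proof (cases "\<exists>i\<in>{1..n}. i_separated p q i")
    case True
    then show ?thesis
      using sep first assms[OF first_separation_in_range[OF True]] unfolding edge_weight_def by auto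
  qed (use sep in \<open>auto simp: edge_weight_def\<close>)
qed

lemma edge_weight_lax_within:
  assumes "positive_cube n r" "positive_cube n q" "\<exists>i\<in>{1..n}. i_separated r p i"
    and "\<forall>i\<in>{1..n}. snd p i \<le> snd q i \<and> cube_w q i \<le> cube_w p i"
  shows "edge_weight n r q \<noteq> 0 \<Longrightarrow>
           edge_weight n r q \<le> edge_weight n r p \<or> edge_weight n r q < edge_weight n p r"
    and "edge_weight n q r \<noteq> 0 \<Longrightarrow>
           edge_weight n q r \<le> edge_weight n p r \<or> edge_weight n q r < edge_weight n r p"
proof -
  have transfer: "(i_below r p i \<longrightarrow> i_below r q i) \<and> (i_below p r i \<longrightarrow> i_below q r i)"
    if "i \<in> {1..n}" for i
  proof -
    have "snd p i \<le> snd q i" "cube_w q i \<le> cube_w p i" using assms(4) that by auto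
    then show ?thesis unfolding i_below_def by auto
  qed
  show "edge_weight n r q \<noteq> 0 \<Longrightarrow>
      edge_weight n r q \<le> edge_weight n r p \<or> edge_weight n r q < edge_weight n p r"
    using edge_weight_lax[OF assms(1,2,3)] transfer by blast
  have "\<exists>i\<in>{1..n}. i_separated p r i" using assms(3) i_separated_commute by blast
  then show "edge_weight n q r \<noteq> 0 \<Longrightarrow>
      edge_weight n q r \<le> edge_weight n p r \<or> edge_weight n q r < edge_weight n r p"
    using edge_weight_lax[OF assms(2,1)] transfer by blast
qed

lemma no_strictly_increasing_cycle:
  fixes f :: "nat \<Rightarrow> 'b::linorder"
  assumes "m > 0"
  shows "\<not> (\<forall>j<m. f j < f ((j + 1) mod m))"
proof
  assume increasing: "\<forall>j<m. f j < f ((j + 1) mod m)"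
  have fin: "finite (f ` {..<m})" "f ` {..<m} \<noteq> {}" using assms by auto
  obtain j where j: "j < m" "f j = Max (f ` {..<m})" using Max_in[OF fin] by auto
  have "f ((j + 1) mod m) \<le> f j" using j fin(1) assms by (simp add: Max_ge)
  then show False using increasing j(1) by fastforce
qed

lemma little_cubes_positive: "little_cubes n A c \<Longrightarrow> a \<in> A \<Longrightarrow> positive_cube n (c a)"
  unfolding little_cubes_def positive_cube_def by auto

lemma positive_cube_compose:
  "positive_cube n p \<Longrightarrow> positive_cube n q \<Longrightarrow> positive_cube n (cube_compose p q)"
  unfolding positive_cube_def cube_compose_def by auto

lemma cube_imageI:
  assumes "positive_cube n q"
    and inside: "\<And>i. i \<in> {1..n} \<Longrightarrow> snd q i < P i \<and> P i < cube_w q i"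
    and outside: "\<And>i. i \<notin> {1..n} \<Longrightarrow> P i = 0"
  shows "P \<in> cube_image n q"
proof -
  define x where "x = (\<lambda>i. if i \<in> {1..n} then (P i - snd q i) / fst q i else 0)"
  have pos: "\<And>i. i \<in> {1..n} \<Longrightarrow> fst q i > 0" using assms(1) by (simp add: positive_cube_def)
  have "x \<in> open_unit_cube n"
    unfolding open_unit_cube_def
  proof (intro CollectI conjI ballI allI impI)
    fix i assume i: "i \<in> {1..n}"
    show "0 < x i" using inside[OF i] pos[OF i] i by (simp add: x_def)
    show "x i < 1" using inside[OF i] pos[OF i] i by (simp add: x_def cube_w_def divide_less_eq)
  qed (auto simp: x_def)
  moreover have "cube_map n q x = P"
  proof
    fix i show "cube_map n q x i = P i"
      using pos[of i] outside[of i] by (cases "i \<in> {1..n}") (auto simp: cube_map_def x_def)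
  qed
  ultimately show ?thesis unfolding cube_image_def by (metis image_eqI)
qed

text \<open>Disjoint open boxes are separated in some coordinate: otherwise the midpoint of the
  coordinatewise intersection lies in both.\<close>
lemma little_cubes_separated:
  assumes cubes: "little_cubes n A c" and "a \<in> A" "b \<in> A" "a \<noteq> b"
  shows "\<exists>i\<in>{1..n}. i_separated (c a) (c b) i"
proof (rule ccontr)
  assume "\<not> ?thesis"
  then have overlap: "\<And>i. i \<in> {1..n} \<Longrightarrow>
      snd (c b) i < cube_w (c a) i \<and> snd (c a) i < cube_w (c b) i"
    unfolding i_separated_def i_below_def by force
  have pos: "positive_cube n (c a)" "positive_cube n (c b)"
    using little_cubes_positive[OF cubes] assms(2,3) by auto
  then have widths: "\<And>i. i \<in> {1..n} \<Longrightarrow> fst (c a) i > 0 \<and> fst (c b) i > 0"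
    unfolding positive_cube_def by blast
  define P where "P = (\<lambda>i. if i \<in> {1..n} then
      (max (snd (c a) i) (snd (c b) i) + min (cube_w (c a) i) (cube_w (c b) i)) / 2 else (0::real))"
  have "snd (c a) i < P i \<and> P i < cube_w (c a) i" "snd (c b) i < P i \<and> P i < cube_w (c b) i"
    if "i \<in> {1..n}" for i
    using overlap[OF that] widths[OF that] that unfolding P_def cube_w_def by auto
  then have "P \<in> cube_image n (c a)" "P \<in> cube_image n (c b)"
    using pos by (auto intro!: cube_imageI simp: P_def)
  moreover have "cube_image n (c a) \<inter> cube_image n (c b) = {}"
    using assms unfolding little_cubes_def by blast
  ultimately show False by blast
qed

lemma affine_maps_unit_interval_into_unit_interval:
  fixes u v :: real
  assumes u: "u > 0" and into: "\<And>t. 0 < t \<Longrightarrow> t < 1 \<Longrightarrow> 0 < u * t + v \<and> u * t + v < 1"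
  shows "0 \<le> v \<and> u + v \<le> 1"
proof (rule conjI; rule ccontr)
  assume "\<not> 0 \<le> v"
  define t where "t = min (1/2) (- v / (2 * u))"
  have "0 < - v / (2 * u)" using \<open>\<not> 0 \<le> v\<close> u by (intro divide_pos_pos) auto
  then have t: "0 < t" "t < 1" by (auto simp: t_def)
  have "u * t \<le> u * (- v / (2 * u))" using u by (intro mult_left_mono) (auto simp: t_def)
  then show False using into[OF t] u \<open>\<not> 0 \<le> v\<close> by simp
next
  assume "\<not> u + v \<le> 1"
  define t where "t = max (1/2) (1 - (u + v - 1) / (2 * u))"
  have t: "0 < t" "t < 1" using \<open>\<not> u + v \<le> 1\<close> u by (auto simp: t_def)
  have "u * (1 - (u + v - 1) / (2 * u)) \<le> u * t" using u by (intro mult_left_mono) (auto simp: t_def)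
  moreover have "u * (1 - (u + v - 1) / (2 * u)) = u - (u + v - 1) / 2" using u by (simp add: field_simps)
  ultimately have "u - (u + v - 1) / 2 \<le> u * t" by simp
  then show False using into[OF t] \<open>\<not> u + v \<le> 1\<close> by (simp add: field_simps)
qed

lemma little_cubes_within_unit_cube:
  assumes "little_cubes n B d" "b \<in> B" "i \<in> {1..n}"
  shows "0 \<le> snd (d b) i \<and> cube_w (d b) i \<le> 1"
proof -
  have u: "fst (d b) i > 0" and sub: "cube_image n (d b) \<subseteq> open_unit_cube n"
    using assms unfolding little_cubes_def by auto
  have "0 < fst (d b) i * t + snd (d b) i \<and> fst (d b) i * t + snd (d b) i < 1"
    if t: "0 < t" "t < 1" for t
  proof -
    define x where "x = (\<lambda>j. if j \<in> {1..n} then (if j = i then t else 1/2) else (0::real))"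
    have "x \<in> open_unit_cube n" unfolding open_unit_cube_def x_def using t by auto
    then have "cube_map n (d b) x \<in> open_unit_cube n" using sub unfolding cube_image_def by blast
    then have "0 < cube_map n (d b) x i \<and> cube_map n (d b) x i < 1"
      using assms(3) unfolding open_unit_cube_def by blast
    then show ?thesis using assms(3) by (simp add: cube_map_def x_def mult.commute)
  qed
  then show ?thesis
    using affine_maps_unit_interval_into_unit_interval[OF u] by (simp add: cube_w_def)
qed

lemma cube_compose_within:
  assumes "fst p i > 0" "0 \<le> snd q i" "cube_w q i \<le> 1"
  shows "snd p i \<le> snd (cube_compose p q) i \<and> cube_w (cube_compose p q) i \<le> cube_w p i"
proof -
  have "fst p i * cube_w q i \<le> fst p i * 1" using assms by (intro mult_left_mono) auto
  then show ?thesis using assms by (simp add: cube_compose_def cube_w_def algebra_simps)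
qed

lemma i_below_cube_compose_iff:
  assumes "fst p i > 0"
  shows "i_below (cube_compose p q) (cube_compose p r) i = i_below q r i"
proof -
  have "i_below (cube_compose p q) (cube_compose p r) i \<longleftrightarrow> fst p i * cube_w q i \<le> fst p i * snd r i"
    by (simp add: i_below_def cube_compose_def cube_w_def algebra_simps)
  also have "\<dots> \<longleftrightarrow> cube_w q i \<le> snd r i" using assms by simp
  finally show ?thesis by (simp add: i_below_def)
qed

lemma graph_ext_phi:
  assumes cubes: "little_cubes n A c"
  shows "graph_ext n A (phi n A c)"
  unfolding graph_ext_def
proof
  have "(edge_weight n (c x) (c y) \<noteq> 0) \<noteq> (edge_weight n (c y) (c x) \<noteq> 0)"
    if "x \<in> A" "y \<in> A" "x \<noteq> y" for x y
    using edge_weight_exactly_one_direction little_cubes_positive[OF cubes]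
      little_cubes_separated[OF cubes] that by blast
  then show "wcd_graph n A (phi n A c)"
    using edge_weight_le by (auto simp: wcd_graph_def phi_eq_edge_weight)
next
  show "\<not> has_uniform_cycle A (phi n A c)"
  proof
    assume "has_uniform_cycle A (phi n A c)"
    then obtain xs i where xs: "xs \<noteq> []" "i \<ge> 1" "set xs \<subseteq> A"
      and cycle: "\<forall>j < length xs. phi n A c (xs ! j) (xs ! ((j + 1) mod length xs)) = i"
      unfolding has_uniform_cycle_def by blast
    let ?m = "length xs"
    have "snd (c (xs ! j)) i < snd (c (xs ! ((j + 1) mod ?m))) i" if j: "j < ?m" for j
    proof -
      let ?x = "xs ! j" and ?y = "xs ! ((j + 1) mod ?m)"
      have "phi n A c ?x ?y = i" using cycle j by blast
      then have xy: "?x \<in> A" and weight: "edge_weight n (c ?x) (c ?y) = i"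
        using xs(2) by (auto simp: phi_eq_edge_weight split: if_splits)
      note edge = edge_weight_nonzeroD[of n "c ?x" "c ?y"]
      have "i \<in> {1..n}" "i_below (c ?x) (c ?y) i"
        using first_separation_in_range edge weight xs(2) by auto
      moreover have "fst (c ?x) i > 0"
        using little_cubes_positive[OF cubes xy] \<open>i \<in> {1..n}\<close> by (simp add: positive_cube_def)
      ultimately show ?thesis by (simp add: i_below_def cube_w_def)
    qed
    then show False using no_strictly_increasing_cycle[of ?m "\<lambda>j. snd (c (xs ! j)) i"] xs(1) by auto
  qed
qed

lemma graph_le_phi_cubes_comp:
  assumes cA: "little_cubes n A c" and dB: "little_cubes n B d" and a: "a \<in> A"
  shows "graph_le (phi n (subst_index A a B) (cubes_comp a c d))
                 (graph_comp a (phi n A c) (phi n B d))"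
  unfolding graph_le_def
proof (intro allI impI)
  let ?g = "phi n (subst_index A a B) (cubes_comp a c d)"
    and ?h = "graph_comp a (phi n A c) (phi n B d)"
    and ?inner = "\<lambda>b. cube_compose (c a) (d b)"
  fix x y assume nonzero: "?g x y \<noteq> 0"
  then have xy: "x \<in> subst_index A a B" "y \<in> subst_index A a B" "x \<noteq> y"
    and g: "?g x y = edge_weight n (cubes_comp a c d x) (cubes_comp a c d y)"
    by (auto simp: phi_eq_edge_weight split: if_splits)
  have a_widths: "\<And>i. i \<in> {1..n} \<Longrightarrow> fst (c a) i > 0"
    using little_cubes_positive[OF cA a] by (simp add: positive_cube_def)
  have inner_positive: "positive_cube n (?inner b)" if "b \<in> B" for b
    using positive_cube_compose little_cubes_positive[OF cA a] little_cubes_positive[OF dB that] .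
  have inner_within: "\<forall>i\<in>{1..n}. snd (c a) i \<le> snd (?inner b) i \<and> cube_w (?inner b) i \<le> cube_w (c a) i"
    if "b \<in> B" for b
    using cube_compose_within[OF a_widths] little_cubes_within_unit_cube[OF dB that] by simp
  note lax = edge_weight_lax_within[OF little_cubes_positive[OF cA] inner_positive
      little_cubes_separated[OF cA _ a] inner_within]
  show "?g x y \<le> ?h x y \<or> ?g x y < ?h y x"
  proof (cases x; cases y)
    fix x' y' assume "x = Inl x'" "y = Inl y'"
    then show ?thesis
      using xy by (auto simp: phi_eq_edge_weight cubes_comp_def graph_comp_def subst_index_def)
  next
    fix x' y' assume x: "x = Inl x'" and y: "y = Inr y'"
    then have "x' \<in> A" "x' \<noteq> a" "y' \<in> B" using xy by (auto simp: subst_index_def)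
    moreover have "?g x y = edge_weight n (c x') (?inner y')"
      "?h x y = edge_weight n (c x') (c a)" "?h y x = edge_weight n (c a) (c x')"
      using g x y a \<open>x' \<in> A\<close> \<open>x' \<noteq> a\<close>
      by (simp_all add: phi_eq_edge_weight cubes_comp_def graph_comp_def)
    ultimately show ?thesis using lax(1)[of x' y'] nonzero by simp
  next
    fix x' y' assume x: "x = Inr x'" and y: "y = Inl y'"
    then have "y' \<in> A" "y' \<noteq> a" "x' \<in> B" using xy by (auto simp: subst_index_def)
    moreover have "?g x y = edge_weight n (?inner x') (c y')"
      "?h x y = edge_weight n (c a) (c y')" "?h y x = edge_weight n (c y') (c a)"
      using g x y a \<open>y' \<in> A\<close> \<open>y' \<noteq> a\<close>
      by (simp_all add: phi_eq_edge_weight cubes_comp_def graph_comp_def)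
    ultimately show ?thesis using lax(2)[of y' x'] nonzero by simp
  next
    fix x' y' assume x: "x = Inr x'" and y: "y = Inr y'"
    then have "x' \<in> B" "y' \<in> B" "x' \<noteq> y'" using xy by (auto simp: subst_index_def)
    moreover have "edge_weight n (?inner x') (?inner y') = edge_weight n (d x') (d y')"
      by (rule edge_weight_cong) (simp add: i_below_cube_compose_iff[OF a_widths])
    ultimately show ?thesis
      using g x y by (simp add: phi_eq_edge_weight cubes_comp_def graph_comp_def)
  qed
qed

lemma phi_relabel_cubes:
  assumes "bij_betw f A A'"
  shows "phi n A' (relabel_cubes f A c) = relabel_graph f A (phi n A c)"
proof (intro ext)
  fix x y
  have image: "f ` A = A'" using assms by (simp add: bij_betw_def)
  show "phi n A' (relabel_cubes f A c) x y = relabel_graph f A (phi n A c) x y"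
  proof (cases "x \<in> A' \<and> y \<in> A'")
    case True
    then have "inv_into A f x \<in> A" "inv_into A f y \<in> A"
      using image by (auto intro: inv_into_into)
    moreover have "inv_into A f x = inv_into A f y \<longleftrightarrow> x = y"
      using True image by (metis f_inv_into_f)
    ultimately show ?thesis
      using True image by (simp add: phi_eq_edge_weight relabel_cubes_def relabel_graph_def)
  qed (use image in \<open>auto simp: phi_eq_edge_weight relabel_cubes_def relabel_graph_def\<close>)
qed

text \<open>Neither \<open>n \<ge> 1\<close> nor the finiteness of the index sets is needed.\<close>
theorem mainTheorem5:
  fixes n :: nat
  assumes "n \<ge> 1"
  shows
    "(\<forall>(A :: 'a set) c. finite A \<and> little_cubes n A c \<longrightarrow> graph_ext n A (phi n A c)) \<and>
     (\<forall>(A :: 'a set) (B :: 'b set) c d a.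
        finite A \<and> finite B \<and> little_cubes n A c \<and> little_cubes n B d \<and> a \<in> A \<longrightarrow>
        graph_le (phi n (subst_index A a B) (cubes_comp a c d))
                 (graph_comp a (phi n A c) (phi n B d))) \<and>
     (\<forall>(A :: 'a set) (A' :: 'c set) f c.
        finite A \<and> bij_betw f A A' \<and> little_cubes n A c \<longrightarrow>
        phi n A' (relabel_cubes f A c) = relabel_graph f A (phi n A c))"
proof (intro conjI allI impI)
  fix A :: "'a set" and c
  assume "finite A \<and> little_cubes n A c"
  then show "graph_ext n A (phi n A c)" by (simp add: graph_ext_phi)
next
  fix A :: "'a set" and B :: "'b set" and c d a
  assume "finite A \<and> finite B \<and> little_cubes n A c \<and> little_cubes n B d \<and> a \<in> A"
  then show "graph_le (phi n (subst_index A a B) (cubes_comp a c d))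
      (graph_comp a (phi n A c) (phi n B d))" by (simp add: graph_le_phi_cubes_comp)
next
  fix A :: "'a set" and A' :: "'c set" and f c
  assume "finite A \<and> bij_betw f A A' \<and> little_cubes n A c"
  then show "phi n A' (relabel_cubes f A c) = relabel_graph f A (phi n A c)"
    by (simp add: phi_relabel_cubes)
qed

end
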